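(* Let $a,b\in\mathbb{R}$ and $\theta\in\mathbb{R}$ with $\cos\theta\ne0$. If $w\in\mathbb{C}\setminus\mathbb{R}$ is a zero of $f^*(\cdot,\theta)$ with $|w|<1$, then, setting $\zeta=1/w$ and $\tau=-\frac{1}{\zeta}-2\cos\theta$, we have $\zeta\tau^3\notin\mathbb{R}$.
   Context: $f^*(\zeta,\theta)=(\zeta+2\cos\theta)(2\zeta\cos\theta+1)+b\zeta-a(\zeta+2\cos\theta)^3$, viewed as a polynomial in complex $\zeta$. *)

theory Defs
  imports "HOL-Analysis.Analysis"
begin

definition fstar :: "real \<Rightarrow> real \<Rightarrow> complex \<Rightarrow> real \<Rightarrow> complex" where
  "fstar a b \<zeta> \<theta> =
     (\<zeta> + 2 * of_real (cos \<theta>)) * (2 * \<zeta> * of_real (cos \<theta>) + 1) + of_real b * \<zeta>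
     - of_real a * (\<zeta> + 2 * of_real (cos \<theta>)) ^ 3"

end

theory Submission
  imports Defs
begin

text \<open>If \<open>\<zeta> \<tau>\<^sup>3 = r\<close> were real, then \<open>(w + 2 cos \<theta>)\<^sup>3 = -r w\<close>, and substituting this into
  \<open>f\<^sup>* (w, \<theta>) = 0\<close> leaves a self-reciprocal quadratic \<open>2 cos \<theta> w\<^sup>2 + q w + 2 cos \<theta>\<close> with
  real coefficients. Its non-real root \<open>w\<close> comes with the root \<open>cnj w\<close>, so by Vieta
  \<open>|w|\<^sup>2 = w cnj w = 1\<close>, contradicting \<open>|w| < 1\<close>.\<close>

lemma real_quadratic_nonreal_root_norm:
  fixes a b c :: real and w :: complex
  assumes "a \<noteq> 0" and "w \<notin> \<real>"
    and root: "of_real a * w\<^sup>2 + of_real b * w + of_real c = 0"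
  shows "a * norm w ^ 2 = c"
proof -
  have root_cnj: "of_real a * (cnj w)\<^sup>2 + of_real b * cnj w + of_real c = 0"
    using arg_cong[OF root, of cnj] by simp
  have "(w - cnj w) * (of_real a * (w + cnj w) + of_real b)
          = (of_real a * w\<^sup>2 + of_real b * w + of_real c)
            - (of_real a * (cnj w)\<^sup>2 + of_real b * cnj w + of_real c)"
    by (simp add: algebra_simps power2_eq_square)
  also have "\<dots> = 0"
    using root root_cnj by simp
  finally have "(w - cnj w) * (of_real a * (w + cnj w) + of_real b) = 0" .
  moreover have "w \<noteq> cnj w"
    using assms(2) Reals_cnj_iff by metis
  ultimately have sum: "of_real a * (w + cnj w) = - of_real b"
    by (simp add: eq_neg_iff_add_eq_0)
  have "complex_of_real c = (of_real a * w\<^sup>2 + of_real b * w + of_real c)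
          - w * (of_real a * (w + cnj w) + of_real b) + of_real a * (w * cnj w)"
    by (simp add: algebra_simps power2_eq_square)
  also have "\<dots> = of_real a * (w * cnj w)"
    using root sum by simp
  finally have "complex_of_real c = of_real a * (w * cnj w)" .
  then have "complex_of_real c = of_real (a * norm w ^ 2)"
    by (simp add: complex_mult_cnj cmod_power2)
  then show ?thesis
    by (simp only: of_real_eq_iff)
qed

lemma fstar_reduces_to_quadratic:
  fixes a b \<theta> r :: real and w :: complex
  assumes "fstar a b w \<theta> = 0"
    and cube: "(w + 2 * of_real (cos \<theta>)) ^ 3 = - of_real r * w"
  shows "of_real (2 * cos \<theta>) * w\<^sup>2 + of_real (1 + 4 * (cos \<theta>)\<^sup>2 + b + a * r) * w
           + of_real (2 * cos \<theta>) = 0"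
  using assms(1) unfolding fstar_def cube
  by (simp add: algebra_simps power2_eq_square)

theorem mainTheorem20:
  fixes a b \<theta> :: real and w :: complex
  assumes "cos \<theta> \<noteq> 0"
    and "w \<notin> \<real>"
    and "fstar a b w \<theta> = 0"
    and "norm w < 1"
  shows "let \<zeta> = 1 / w; \<tau> = - (1 / \<zeta>) - 2 * of_real (cos \<theta>) in \<zeta> * \<tau> ^ 3 \<notin> \<real>"
proof (unfold Let_def, rule notI)
  have "w \<noteq> 0"
    using assms(2) by auto
  assume "1 / w * (- (1 / (1 / w)) - 2 * complex_of_real (cos \<theta>)) ^ 3 \<in> \<real>"
  then obtain r where "(- w - 2 * of_real (cos \<theta>)) ^ 3 / w = of_real r"
    by (auto elim!: Reals_cases simp: field_simps)
  then have "(- w - 2 * of_real (cos \<theta>)) ^ 3 = of_real r * w"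
    using \<open>w \<noteq> 0\<close> by (simp add: field_simps)
  moreover have "(- w - 2 * of_real (cos \<theta>)) ^ 3 = - ((w + 2 * of_real (cos \<theta>)) ^ 3)"
    by (simp add: power3_eq_cube algebra_simps)
  ultimately have cube: "(w + 2 * of_real (cos \<theta>)) ^ 3 = - of_real r * w"
    by (metis minus_equation_iff mult_minus_left)
  have "2 * cos \<theta> * norm w ^ 2 = 2 * cos \<theta>"
    using assms(1,2) fstar_reduces_to_quadratic[OF assms(3) cube]
    by (intro real_quadratic_nonreal_root_norm) (simp_all del: of_real_add of_real_mult of_real_power)
  then have "norm w ^ 2 = 1"
    using assms(1) by simp
  with assms(4) show False
    by (metis abs_norm_cancel abs_square_eq_1 less_irrefl)
qed

end
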